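(* Suppose Assumption (F) below holds, and let $F(r)=\frac{r}{1+r}$. Define $g(x,k,z,l)=\mathbf 1_{\{k\ne l\}}$ and $f(x,k,z,l)=F(|x-z|)+\mathbf 1_{\{k\ne l\}}$ on $\mathbb R^d\times\mathbb S\times\mathbb R^d\times\mathbb S$. Then for every $R>0$, with $\kappa_R$ the constant of Assumption (F): (1) $\widetilde{\mathcal A}g(x,k,z,l)\le\kappa_R\varrho(F(|x-z|))$ for all $k,l\in\mathbb S$ and $x,z\in\mathbb R^d$ with $|x|\vee|z|\le R$; (2) $\widetilde{\mathcal A}f(x,k,z,k)\le2\kappa_R\varrho(F(|x-z|))$ for all $k\in\mathbb S$ and $x,z\in\mathbb R^d$ with $|x|\vee|z|\le R$ and $0<|x-z|\le\delta_0$.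
   Context: Setting: $(U,\mathfrak U)$ measurable space, $\nu$ $\sigma$-finite on $U$, $\mathbb S=\{1,2,\dots\}$; Borel maps $b:\mathbb R^d\times\mathbb S\to\mathbb R^d$, $\sigma:\mathbb R^d\times\mathbb S\to\mathbb R^{d\times d}$, $c:\mathbb R^d\times\mathbb S\times U\to\mathbb R^d$; $q_{kl}(x)\ge0$ ($k\ne l$), $q_{kk}(x)=-\sum_{l\ne k}q_{kl}(x)$. Coupling operator: for $f$ on $\mathbb R^d\times\mathbb S\times\mathbb R^d\times\mathbb S$ twice continuously differentiable in $(x,z)$, set $\widetilde{\mathcal A}f=(\widetilde\Omega_d+\widetilde\Omega_j+\widetilde\Omega_s)f$, where, with $a(x,i)=\sigma(x,i)\sigma(x,i)^T$, $a(x,i,z,j)=\begin{pmatrix}a(x,i)&\sigma(x,i)\sigma(z,j)^T\\ \sigma(z,j)\sigma(x,i)^T&a(z,j)\end{pmatrix}$, $b(x,i,z,j)=(b(x,i),b(z,j))^T$, and $D,D^2$ the gradient and Hessian in $(x,z)$: $\widetilde\Omega_df=\frac12\mathrm{tr}(a(x,i,z,j)D^2f)+\langle b(x,i,z,j),Df\rangle$; $\widetilde\Omega_jf=\int_U[f(x+c(x,i,u),i,z+c(z,j,u),j)-f(x,i,z,j)-\langle D_xf,c(x,i,u)\rangle-\langle D_zf,c(z,j,u)\rangle]\nu(du)$; $\widetilde\Omega_sf=\sum_l[q_{il}(x)-q_{jl}(z)]^+(f(x,l,z,j)-f(x,i,z,j))+\sum_l[q_{jl}(z)-q_{il}(x)]^+(f(x,i,z,l)-f(x,i,z,j))+\sum_l[q_{il}(x)\wedge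 q_{jl}(z)](f(x,l,z,l)-f(x,i,z,j))$. Assumption (F): there exist $\delta_0>0$ and an increasing concave $\varrho:[0,\infty)\to[0,\infty)$ with $0<\varrho(r)\le(1+r)^2\varrho(r/(1+r))$ for all $r>0$ and $\int_{0^+}\frac{dr}{\varrho(r)}=\infty$, such that for every $R>0$ there is $\kappa_R>0$ with $\sum_{l\ne k}|q_{kl}(x)-q_{kl}(z)|\le\kappa_R\varrho(F(|x-z|))$ for all $k$ and $|x|\vee|z|\le R$, and, for all $k\in\mathbb S$ and $x,z$ with $|x|\vee|z|\le R$, $|x-z|\le\delta_0$: (i) if $d=1$: $\mathrm{sgn}(x-z)(b(x,k)-b(z,k))\le\kappa_R\varrho(|x-z|)$ (with $\mathrm{sgn}(a)=1$ if $a>0$, $-1$ if $a\le0$), and $x\mapsto x+c(x,k,u)$ is nondecreasing for every $u\in U$; (ii) if $d\ge2$: $\int_U[|c(x,k,u)-c(z,k,u)|^2\wedge(4|x-z|\,|c(x,k,u)-c(z,k,u)|)]\nu(du)+2\langle x-z,b(x,k)-b(z,k)\rangle+|\sigma(x,k)-\sigma(z,k)|^2\le2\kappa_R|x-z|\varrho(|x-z|)$. *)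

theory Defs
  imports "HOL-Analysis.Analysis"
begin

text \<open>The dimension d is CARD('n), points of R^d are real^'n.
  The state space S = {1,2,...} is represented by nat (state n+1 of the paper is n here).
  Matrices are real^'n^'n; the norm of a matrix is the Frobenius (Hilbert-Schmidt) norm.\<close>

definition Fr :: "real \<Rightarrow> real" where
  "Fr r = r / (1 + r)"

definition sgnF :: "real \<Rightarrow> real" where
  "sgnF a = (if a > 0 then 1 else -1)"

definition joinv :: "real^'n \<Rightarrow> real^'n \<Rightarrow> real^('n + 'n)" where
  "joinv x z = (\<chi> s. case s of Inl p \<Rightarrow> x $ p | Inr p \<Rightarrow> z $ p)"

definition splitx :: "real^('n + 'n) \<Rightarrow> real^'n" where
  "splitx w = (\<chi> p. w $ Inl p)"

definition splitz :: "real^('n + 'n) \<Rightarrow> real^'n" where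
  "splitz w = (\<chi> p. w $ Inr p)"

definition pd :: "'m::finite \<Rightarrow> (real^'m \<Rightarrow> real) \<Rightarrow> real^'m \<Rightarrow> real" where
  "pd s \<phi> w = deriv (\<lambda>t. \<phi> (w + t *\<^sub>R axis s 1)) 0"

definition grad :: "(real^'m::finite \<Rightarrow> real) \<Rightarrow> real^'m \<Rightarrow> real^'m" where
  "grad \<phi> w = (\<chi> s. pd s \<phi> w)"

definition hess :: "(real^'m::finite \<Rightarrow> real) \<Rightarrow> real^'m \<Rightarrow> real^'m^'m" where
  "hess \<phi> w = (\<chi> s t. pd s (pd t \<phi>) w)"

definition joint_fun :: "(real^'n \<Rightarrow> nat \<Rightarrow> real^'n \<Rightarrow> nat \<Rightarrow> real) \<Rightarrow> nat \<Rightarrow> nat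
    \<Rightarrow> real^('n + 'n) \<Rightarrow> real" where
  "joint_fun f i j w = f (splitx w) i (splitz w) j"

definition Dx :: "(real^'n \<Rightarrow> nat \<Rightarrow> real^'n \<Rightarrow> nat \<Rightarrow> real) \<Rightarrow> real^'n \<Rightarrow> nat \<Rightarrow> real^'n \<Rightarrow> nat
    \<Rightarrow> real^'n" where
  "Dx f x i z j = (\<chi> p. grad (joint_fun f i j) (joinv x z) $ Inl p)"

definition Dz :: "(real^'n \<Rightarrow> nat \<Rightarrow> real^'n \<Rightarrow> nat \<Rightarrow> real) \<Rightarrow> real^'n \<Rightarrow> nat \<Rightarrow> real^'n \<Rightarrow> nat
    \<Rightarrow> real^'n" where
  "Dz f x i z j = (\<chi> p. grad (joint_fun f i j) (joinv x z) $ Inr p)"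

definition coup_a :: "(real^'n \<Rightarrow> nat \<Rightarrow> real^'n^'n) \<Rightarrow> real^'n \<Rightarrow> nat \<Rightarrow> real^'n \<Rightarrow> nat
    \<Rightarrow> real^('n + 'n)^('n + 'n)" where
  "coup_a \<sigma> x i z j = (\<chi> s t. case (s, t) of
      (Inl p, Inl q) \<Rightarrow> (\<sigma> x i ** transpose (\<sigma> x i)) $ p $ q
    | (Inl p, Inr q) \<Rightarrow> (\<sigma> x i ** transpose (\<sigma> z j)) $ p $ q
    | (Inr p, Inl q) \<Rightarrow> (\<sigma> z j ** transpose (\<sigma> x i)) $ p $ q
    | (Inr p, Inr q) \<Rightarrow> (\<sigma> z j ** transpose (\<sigma> z j)) $ p $ q)"

definition Omega_d :: "(real^'n \<Rightarrow> nat \<Rightarrow> real^'n) \<Rightarrow> (real^'n \<Rightarrow> nat \<Rightarrow> real^'n^'n)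
    \<Rightarrow> (real^'n \<Rightarrow> nat \<Rightarrow> real^'n \<Rightarrow> nat \<Rightarrow> real) \<Rightarrow> real^'n \<Rightarrow> nat \<Rightarrow> real^'n \<Rightarrow> nat \<Rightarrow> real" where
  "Omega_d b \<sigma> f x i z j =
     1/2 * trace (coup_a \<sigma> x i z j ** hess (joint_fun f i j) (joinv x z))
     + joinv (b x i) (b z j) \<bullet> grad (joint_fun f i j) (joinv x z)"

definition Omega_j :: "(real^'n \<Rightarrow> nat \<Rightarrow> 'u \<Rightarrow> real^'n) \<Rightarrow> 'u measure
    \<Rightarrow> (real^'n \<Rightarrow> nat \<Rightarrow> real^'n \<Rightarrow> nat \<Rightarrow> real) \<Rightarrow> real^'n \<Rightarrow> nat \<Rightarrow> real^'n \<Rightarrow> nat \<Rightarrow> real" where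
  "Omega_j c \<nu> f x i z j =
     (\<integral>u. f (x + c x i u) i (z + c z j u) j - f x i z j
            - Dx f x i z j \<bullet> c x i u - Dz f x i z j \<bullet> c z j u \<partial>\<nu>)"

definition Omega_s :: "(nat \<Rightarrow> nat \<Rightarrow> real^'n \<Rightarrow> real)
    \<Rightarrow> (real^'n \<Rightarrow> nat \<Rightarrow> real^'n \<Rightarrow> nat \<Rightarrow> real) \<Rightarrow> real^'n \<Rightarrow> nat \<Rightarrow> real^'n \<Rightarrow> nat \<Rightarrow> real" where
  "Omega_s q f x i z j =
     (\<Sum>l. max 0 (q i l x - q j l z) * (f x l z j - f x i z j))
   + (\<Sum>l. max 0 (q j l z - q i l x) * (f x i z l - f x i z j))
   + (\<Sum>l. min (q i l x) (q j l z) * (f x l z l - f x i z j))"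

definition coupA :: "(real^'n \<Rightarrow> nat \<Rightarrow> real^'n) \<Rightarrow> (real^'n \<Rightarrow> nat \<Rightarrow> real^'n^'n)
    \<Rightarrow> (real^'n \<Rightarrow> nat \<Rightarrow> 'u \<Rightarrow> real^'n) \<Rightarrow> 'u measure \<Rightarrow> (nat \<Rightarrow> nat \<Rightarrow> real^'n \<Rightarrow> real)
    \<Rightarrow> (real^'n \<Rightarrow> nat \<Rightarrow> real^'n \<Rightarrow> nat \<Rightarrow> real) \<Rightarrow> real^'n \<Rightarrow> nat \<Rightarrow> real^'n \<Rightarrow> nat \<Rightarrow> real" where
  "coupA b \<sigma> c \<nu> q f x i z j = Omega_d b \<sigma> f x i z j + Omega_j c \<nu> f x i z j + Omega_s q f x i z j"

definition condF :: "(real^'n \<Rightarrow> nat \<Rightarrow> real^'n) \<Rightarrow> (real^'n \<Rightarrow> nat \<Rightarrow> real^'n^'n)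
    \<Rightarrow> (real^'n \<Rightarrow> nat \<Rightarrow> 'u \<Rightarrow> real^'n) \<Rightarrow> 'u measure \<Rightarrow> (nat \<Rightarrow> nat \<Rightarrow> real^'n \<Rightarrow> real)
    \<Rightarrow> real \<Rightarrow> (real \<Rightarrow> real) \<Rightarrow> real \<Rightarrow> real \<Rightarrow> bool" where
  "condF b \<sigma> c \<nu> q \<delta>0 \<rho> R \<kappa> \<longleftrightarrow>
     (\<forall>k x z. max (norm x) (norm z) \<le> R \<longrightarrow>
        (\<Sum>l. if l = k then 0 else \<bar>q k l x - q k l z\<bar>) \<le> \<kappa> * \<rho> (Fr (norm (x - z)))) \<and>
     (\<forall>k x z. max (norm x) (norm z) \<le> R \<and> norm (x - z) \<le> \<delta>0 \<longrightarrow>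
        (CARD('n) = 1 \<longrightarrow>
           (\<forall>p. sgnF (x $ p - z $ p) * (b x k $ p - b z k $ p) \<le> \<kappa> * \<rho> (norm (x - z))) \<and>
           (\<forall>u\<in>space \<nu>. \<forall>p. x $ p \<le> z $ p \<longrightarrow> (x + c x k u) $ p \<le> (z + c z k u) $ p)) \<and>
        (CARD('n) \<ge> 2 \<longrightarrow>
           enn2ereal (\<integral>\<^sup>+ u. ennreal (min ((norm (c x k u - c z k u))\<^sup>2)
                                   (4 * norm (x - z) * norm (c x k u - c z k u))) \<partial>\<nu>)
           + ereal (2 * ((x - z) \<bullet> (b x k - b z k)) + (norm (\<sigma> x k - \<sigma> z k))\<^sup>2)
           \<le> ereal (2 * \<kappa> * norm (x - z) * \<rho> (norm (x - z)))))"

end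

theory Submission
  imports Defs
begin

text \<open>The function \<open>g\<close> does not depend on the positions, so only the switching part acts on it:
  at equal regimes it produces the total variation \<open>\<Sum>\<^sub>l\<^sub>\<noteq>\<^sub>k |q\<^sub>k\<^sub>l(x) - q\<^sub>k\<^sub>l(z)|\<close> of the
  rates, which Assumption (F) bounds by \<open>\<kappa>\<^sub>R \<rho>(F |x - z|)\<close>, and at different regimes it is
  nonpositive, because the coupling can only merge the regimes.

  For \<open>f\<close> at equal regimes the switching part is the same, and the remaining part acts on
  \<open>F(|x - z|)\<close>. Away from the diagonal its gradient is \<open>G(r) (x - z)\<close> and its Hessian
  \<open>G'(r)/r (x - z)(x - z)\<^sup>T + G(r) I\<close> (with signs in the joint variable), where
  \<open>r = |x - z|\<close>, \<open>G(r) = F'(r)/r = 1/(r(1+r)\<^sup>2)\<close> and \<open>G' < 0\<close>. Dropping the \<open>G'\<close> term and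
  bounding the jump remainder by concavity of \<open>F\<close>, the diffusion and jump parts are at most
  \<open>G(r)/2\<close> times the left side of (F)(ii) when \<open>d \<ge> 2\<close>. When \<open>d = 1\<close> the second-order term is
  \<open>\<sigma>\<^sup>2 (G'(r) r + G(r)) \<le> 0\<close> and monotone jumps preserve the sign of \<open>x - z\<close>, so the jump remainder
  is nonpositive by concavity and only the drift remains. Either way the bound is
  \<open>\<kappa>\<^sub>R \<rho>(r) G(r) r = \<kappa>\<^sub>R \<rho>(r)/(1+r)\<^sup>2 \<le> \<kappa>\<^sub>R \<rho>(F r)\<close> by the growth condition on \<open>\<rho>\<close>.\<close>

definition diffv :: "real^('n + 'n) \<Rightarrow> real^'n" where
  "diffv w = splitx w - splitz w"

definition coord :: "'n + 'n \<Rightarrow> 'n" where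
  "coord s = (case s of Inl p \<Rightarrow> p | Inr p \<Rightarrow> p)"

definition side_sign :: "'n + 'n \<Rightarrow> real" where
  "side_sign s = (case s of Inl p \<Rightarrow> 1 | Inr p \<Rightarrow> -1)"

definition Fr_dist :: "real^('n::finite + 'n) \<Rightarrow> real" where
  "Fr_dist w = Fr (norm (diffv w))"

text \<open>\<open>Fr_slope r = Fr' r / r\<close>, so that the gradient of \<open>Fr \<circ> norm\<close> at \<open>v\<close> is
  \<open>Fr_slope (norm v) *\<^sub>R v\<close>; \<open>Fr_slope_deriv\<close> is its derivative.\<close>
definition Fr_slope :: "real \<Rightarrow> real" where
  "Fr_slope r = 1 / (r * (1 + r)^2)"

definition Fr_slope_deriv :: "real \<Rightarrow> real" where
  "Fr_slope_deriv r = - (1 + 3 * r) / (r^2 * (1 + r)^3)"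

lemma diffv_joinv [simp]: "diffv (joinv x z) = x - z"
  by (simp add: vec_eq_iff diffv_def splitx_def splitz_def joinv_def)

lemma diffv_add_axis:
  "diffv (w + t *\<^sub>R axis s 1) = diffv w + (t * side_sign s) *\<^sub>R axis (coord s) (1::real)"
  by (cases s) (auto simp: vec_eq_iff diffv_def splitx_def splitz_def axis_def coord_def side_sign_def)

lemma sum_UNIV_Plus:
  "sum g (UNIV :: ('a::finite + 'b::finite) set) = (\<Sum>p\<in>UNIV. g (Inl p)) + (\<Sum>p\<in>UNIV. g (Inr p))"
  by (subst UNIV_Plus_UNIV[symmetric], subst sum.Plus) (auto simp: o_def)

lemma norm_line_has_real_derivative:
  fixes v a :: "'a::real_inner"
  assumes "v \<noteq> 0"
  shows "((\<lambda>t. norm (v + t *\<^sub>R a)) has_real_derivative (v \<bullet> a) / norm v) (at 0)"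
proof -
  have "((\<lambda>t. v + t *\<^sub>R a) has_derivative (\<lambda>h. h *\<^sub>R a)) (at 0)"
    by (auto intro!: derivative_eq_intros)
  from has_derivative_compose[OF this has_derivative_norm[of "v + 0 *\<^sub>R a"]]
  have "((\<lambda>t. norm (v + t *\<^sub>R a)) has_derivative (\<lambda>h. inverse (norm v) * (h * (a \<bullet> v)))) (at 0)"
    using assms by (simp add: sgn_div_norm inner_commute mult.commute)
  moreover have "(\<lambda>h. inverse (norm v) * (h * (a \<bullet> v))) = (*) ((v \<bullet> a) / norm v)"
    by (auto simp: fun_eq_iff field_simps inner_commute)
  ultimately show ?thesis by (simp add: has_field_derivative_def)
qed

lemma Fr_has_real_derivative: "r > -1 \<Longrightarrow> (Fr has_real_derivative 1 / (1 + r)^2) (at r)"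
  unfolding Fr_def[abs_def]
  by (auto intro!: derivative_eq_intros simp: field_simps power2_eq_square)

lemma Fr_slope_has_real_derivative:
  assumes "r > 0"
  shows "(Fr_slope has_real_derivative Fr_slope_deriv r) (at r)"
proof -
  have nz: "r * (1 + r)^2 \<noteq> 0" "(r * (1 + r)^2)^2 \<noteq> 0" "r^2 * (1 + r)^3 \<noteq> 0"
    using assms by auto
  have "((\<lambda>r. 1 / (r * (1 + r)^2)) has_real_derivative
      - (1 * (1 + r)^2 + r * (2 * (1 + r))) / (r * (1 + r)^2)^2) (at r)"
    using nz(1) by (auto intro!: derivative_eq_intros simp: power2_eq_square algebra_simps)
  moreover have "- (1 * (1 + r)^2 + r * (2 * (1 + r))) / (r * (1 + r)^2)^2 = Fr_slope_deriv r"
    unfolding Fr_slope_deriv_def by (subst frac_eq_eq[OF nz(2,3)]) algebra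
  ultimately show ?thesis unfolding Fr_slope_def[abs_def] by simp
qed

lemma Fr_slope_mult_self: "r > 0 \<Longrightarrow> Fr_slope r * r = 1 / (1 + r)^2"
  by (simp add: Fr_slope_def)

lemma Fr_slope_pos: "r > 0 \<Longrightarrow> Fr_slope r > 0"
  by (simp add: Fr_slope_def)

lemma Fr_slope_deriv_neg: "r > 0 \<Longrightarrow> Fr_slope_deriv r < 0"
  by (simp add: Fr_slope_deriv_def divide_neg_pos add_pos_pos)

lemma Fr_slope_deriv_mult_add_nonpos:
  assumes "r > 0"
  shows "Fr_slope_deriv r * r + Fr_slope r \<le> 0"
proof -
  have nz: "r * (1 + r)^3 \<noteq> 0" using assms by auto
  have "Fr_slope_deriv r * r + Fr_slope r = - 2 * r / (r * (1 + r)^3)"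
    using nz unfolding Fr_slope_deriv_def Fr_slope_def
    by (simp add: divide_simps power2_eq_square power3_eq_cube)
  also have "\<dots> \<le> 0"
    using assms by (intro divide_nonpos_pos) auto
  finally show ?thesis .
qed

lemma inner_scaleR_axis: "v \<bullet> (e *\<^sub>R axis p (1::real)) = e * v $ p"
  by (simp add: inner_axis)

lemma axis_nth: "axis q (1::real) $ p = (if p = q then 1 else 0)"
  by (simp add: axis_def)

lemma pd_Fr_dist:
  assumes "diffv w \<noteq> 0"
  shows "pd s Fr_dist w = side_sign s * Fr_slope (norm (diffv w)) * diffv w $ coord s"
proof -
  let ?v = "diffv w" and ?a = "side_sign s *\<^sub>R axis (coord s) (1::real)"
  have "((\<lambda>t. Fr (norm (?v + t *\<^sub>R ?a))) has_real_derivative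
      1 / (1 + norm (?v + 0 *\<^sub>R ?a))^2 * ((?v \<bullet> ?a) / norm ?v)) (at 0)"
    by (rule DERIV_chain2[OF Fr_has_real_derivative norm_line_has_real_derivative[OF assms]])
      (use norm_ge_zero[of "?v + 0 *\<^sub>R ?a"] in linarith)
  moreover have "1 / (1 + norm (?v + 0 *\<^sub>R ?a))^2 * ((?v \<bullet> ?a) / norm ?v)
      = side_sign s * Fr_slope (norm ?v) * ?v $ coord s"
    using assms by (simp add: inner_scaleR_axis inner_axis Fr_slope_def field_simps)
  ultimately show ?thesis
    unfolding pd_def Fr_dist_def diffv_add_axis by (simp add: DERIV_imp_deriv)
qed

lemma eventually_diffv_add_axis_nonzero:
  assumes "diffv w \<noteq> 0"
  shows "eventually (\<lambda>t. diffv (w + t *\<^sub>R axis s 1) \<noteq> 0) (nhds 0)"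
proof -
  have "eventually (\<lambda>t::real. dist t 0 < norm (diffv w)) (nhds 0)"
    using assms unfolding eventually_nhds_metric by (intro exI[of _ "norm (diffv w)"]) auto
  then show ?thesis
  proof (rule eventually_mono)
    fix t :: real assume "dist t 0 < norm (diffv w)"
    then have "norm ((t * side_sign s) *\<^sub>R axis (coord s) (1::real)) < norm (diffv w)"
      by (simp add: side_sign_def split: sum.splits)
    then show "diffv (w + t *\<^sub>R axis s 1) \<noteq> 0" unfolding diffv_add_axis
      by (metis add.commute add_diff_cancel_left' diff_0 norm_minus_cancel order_less_irrefl)
  qed
qed

lemma pd_pd_Fr_dist:
  assumes nz: "diffv w \<noteq> 0"
  shows "pd s (pd t Fr_dist) w = side_sign s * side_sign t *
    (Fr_slope_deriv (norm (diffv w)) / norm (diffv w) * diffv w $ coord s * diffv w $ coord t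
     + Fr_slope (norm (diffv w)) * (if coord t = coord s then 1 else 0))"
proof -
  let ?v = "diffv w" and ?a = "side_sign s *\<^sub>R axis (coord s) (1::real)"
  define h where "h = (\<lambda>\<tau>. side_sign t * Fr_slope (norm (?v + \<tau> *\<^sub>R ?a)) * (?v $ coord t + \<tau> * ?a $ coord t))"
  have pd_eq: "eventually (\<lambda>\<tau>. pd t Fr_dist (w + \<tau> *\<^sub>R axis s 1) = h \<tau>) (nhds 0)"
    using eventually_diffv_add_axis_nonzero[OF nz, of s]
    by eventually_elim (simp add: pd_Fr_dist diffv_add_axis h_def)
  have "norm ?v > 0" using nz by simp
  then have slope: "((\<lambda>\<tau>. Fr_slope (norm (?v + \<tau> *\<^sub>R ?a))) has_real_derivative
      Fr_slope_deriv (norm (?v + 0 *\<^sub>R ?a)) * ((?v \<bullet> ?a) / norm ?v)) (at 0)"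
    using DERIV_chain2[OF Fr_slope_has_real_derivative norm_line_has_real_derivative[OF nz], of ?a] by simp
  have "(h has_real_derivative side_sign t * (Fr_slope_deriv (norm ?v) * ((?v \<bullet> ?a) / norm ?v)
      * (?v $ coord t + 0 * ?a $ coord t) + Fr_slope (norm (?v + 0 *\<^sub>R ?a)) * (?a $ coord t))) (at 0)"
    unfolding h_def
    by (rule DERIV_cong, (rule derivative_eq_intros slope refl)+) (simp add: algebra_simps)
  then have "(h has_real_derivative side_sign s * side_sign t *
    (Fr_slope_deriv (norm ?v) / norm ?v * ?v $ coord s * ?v $ coord t
     + Fr_slope (norm ?v) * (if coord t = coord s then 1 else 0))) (at 0)"
    by (simp only: inner_scaleR_axis axis_nth vector_scaleR_component) (simp add: algebra_simps)
  then show ?thesis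
    unfolding pd_def[of s] DERIV_cong_ev[OF refl pd_eq refl, symmetric] by (rule DERIV_imp_deriv)
qed

lemma grad_Fr_dist_joinv:
  assumes "x \<noteq> z"
  shows "grad Fr_dist (joinv x z) $ s = side_sign s * Fr_slope (norm (x - z)) * (x - z) $ coord s"
  using assms by (simp add: grad_def pd_Fr_dist)

lemma hess_Fr_dist_joinv:
  assumes "x \<noteq> z"
  shows "hess Fr_dist (joinv x z) $ s $ t = side_sign s * side_sign t *
    (Fr_slope_deriv (norm (x - z)) / norm (x - z) * (x - z) $ coord s * (x - z) $ coord t
     + Fr_slope (norm (x - z)) * (if coord t = coord s then 1 else 0))"
  using assms by (simp add: hess_def pd_pd_Fr_dist)

text \<open>With \<open>S = T T\<^sup>T\<close>: \<open>trace (S (\<alpha> v v\<^sup>T + \<beta> I)) = \<alpha> |T\<^sup>T v|\<^sup>2 + \<beta> |T|\<^sup>2\<close>.\<close>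
lemma trace_gram_rank_one_update:
  fixes T :: "'n::finite \<Rightarrow> 'm::finite \<Rightarrow> real" and v :: "'n \<Rightarrow> real"
  shows "(\<Sum>p\<in>UNIV. \<Sum>q\<in>UNIV. (\<Sum>j\<in>UNIV. T p j * T q j) * (\<alpha> * v q * v p + \<beta> * (if q = p then 1 else 0)))
     = \<alpha> * (\<Sum>j\<in>UNIV. (\<Sum>p\<in>UNIV. T p j * v p)^2) + \<beta> * (\<Sum>p\<in>UNIV. \<Sum>j\<in>UNIV. (T p j)^2)"
proof -
  have split: "(\<Sum>j\<in>UNIV. T p j * T q j) * (\<alpha> * v q * v p + \<beta> * (if q = p then 1 else 0))
      = \<alpha> * (\<Sum>j\<in>UNIV. T p j * T q j * v q * v p) + (if q = p then \<beta> * (\<Sum>j\<in>UNIV. (T p j)^2) else 0)"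
    for p q
    by (simp add: distrib_left distrib_right sum_distrib_left sum_distrib_right power2_eq_square
        mult.commute mult.left_commute)
  have "(\<Sum>p\<in>UNIV. \<Sum>q\<in>UNIV. \<Sum>j\<in>UNIV. T p j * T q j * v q * v p)
      = (\<Sum>p\<in>UNIV. \<Sum>j\<in>UNIV. \<Sum>q\<in>UNIV. T p j * T q j * v q * v p)"
    by (rule sum.cong[OF refl], rule sum.swap)
  also have "\<dots> = (\<Sum>j\<in>UNIV. \<Sum>p\<in>UNIV. \<Sum>q\<in>UNIV. T p j * T q j * v q * v p)"
    by (rule sum.swap)
  also have "\<dots> = (\<Sum>j\<in>UNIV. (\<Sum>p\<in>UNIV. T p j * v p)^2)"
    by (simp add: power2_eq_square sum_product mult.commute mult.left_commute)
  finally have "(\<Sum>p\<in>UNIV. \<Sum>q\<in>UNIV. \<alpha> * (\<Sum>j\<in>UNIV. T p j * T q j * v q * v p))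
      = \<alpha> * (\<Sum>j\<in>UNIV. (\<Sum>p\<in>UNIV. T p j * v p)^2)"
    by (simp only: sum_distrib_left[symmetric])
  then show ?thesis
    by (simp add: split sum.distrib sum_distrib_left)
qed

lemma trace_coup_a_hess_Fr_dist:
  fixes \<sigma> :: "real^'n \<Rightarrow> nat \<Rightarrow> real^'n^'n"
  assumes "x \<noteq> z"
  shows "trace (coup_a \<sigma> x k z k ** hess Fr_dist (joinv x z)) =
    Fr_slope_deriv (norm (x - z)) / norm (x - z)
      * (\<Sum>j\<in>UNIV. (\<Sum>p\<in>UNIV. (\<sigma> x k - \<sigma> z k) $ p $ j * (x - z) $ p)^2)
    + Fr_slope (norm (x - z)) * (norm (\<sigma> x k - \<sigma> z k))^2"
proof -
  define T where "T = \<sigma> x k - \<sigma> z k"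
  define M where "M = (\<lambda>q p. Fr_slope_deriv (norm (x - z)) / norm (x - z) * (x - z) $ q * (x - z) $ p
    + Fr_slope (norm (x - z)) * (if q = p then 1 else (0::real)))"
  have H: "hess Fr_dist (joinv x z) $ s $ t = side_sign s * side_sign t * M (coord s) (coord t)" for s t
    using hess_Fr_dist_joinv[OF assms] by (simp add: M_def)
  have "trace (coup_a \<sigma> x k z k ** hess Fr_dist (joinv x z))
      = (\<Sum>p\<in>UNIV. \<Sum>q\<in>UNIV. (\<Sum>j\<in>UNIV. T $ p $ j * T $ q $ j) * M q p)"
    unfolding trace_def matrix_matrix_mult_def H
    by (simp add: sum_UNIV_Plus coup_a_def side_sign_def coord_def matrix_matrix_mult_def
         transpose_def T_def sum.distrib[symmetric] sum_subtractf[symmetric] sum_distrib_right algebra_simps)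
       (simp add: sum.distrib sum_subtractf right_diff_distrib distrib_left)
  also have "\<dots> = Fr_slope_deriv (norm (x - z)) / norm (x - z) * (\<Sum>j\<in>UNIV. (\<Sum>p\<in>UNIV. T $ p $ j * (x - z) $ p)^2)
      + Fr_slope (norm (x - z)) * (\<Sum>p\<in>UNIV. \<Sum>j\<in>UNIV. (T $ p $ j)^2)"
    unfolding M_def by (rule trace_gram_rank_one_update)
  also have "(\<Sum>p\<in>UNIV. \<Sum>j\<in>UNIV. (T $ p $ j)^2) = (norm T)^2"
    unfolding power2_norm_eq_inner by (simp add: inner_vec_def power2_eq_square)
  finally show ?thesis by (simp add: T_def)
qed

abbreviation regime_mismatch :: "real^'n \<Rightarrow> nat \<Rightarrow> real^'n \<Rightarrow> nat \<Rightarrow> real" where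
  "regime_mismatch \<equiv> \<lambda>x k z l. if k \<noteq> l then 1 else 0"

abbreviation coupling_distance :: "real^'n \<Rightarrow> nat \<Rightarrow> real^'n \<Rightarrow> nat \<Rightarrow> real" where
  "coupling_distance \<equiv> \<lambda>x k z l. Fr (norm (x - z)) + (if k \<noteq> l then 1 else 0)"

lemma joint_fun_coupling_distance: "joint_fun coupling_distance k k = Fr_dist"
  by (simp add: fun_eq_iff joint_fun_def Fr_dist_def diffv_def)

lemma pd_const: "pd s (\<lambda>w. C) w = 0"
  unfolding pd_def by (rule DERIV_imp_deriv[OF DERIV_const])

lemma joint_fun_state_only: "joint_fun (\<lambda>x k z l. h k l) k l = (\<lambda>w. h k l)"
  by (simp add: fun_eq_iff joint_fun_def)

lemma Omega_d_state_only: "Omega_d b \<sigma> (\<lambda>x k z l. h k l) x k z l = 0"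
  by (simp add: Omega_d_def joint_fun_state_only hess_def grad_def pd_const[abs_def]
      trace_def matrix_matrix_mult_def inner_vec_def)

lemma Omega_j_state_only: "Omega_j c \<nu> (\<lambda>x k z l. h k l) x k z l = 0"
  by (simp add: Omega_j_def Dx_def Dz_def joint_fun_state_only grad_def pd_const inner_vec_def)

lemma Omega_d_coupling_distance:
  assumes "x \<noteq> z"
  shows "Omega_d b \<sigma> coupling_distance x k z k =
    1/2 * (Fr_slope_deriv (norm (x - z)) / norm (x - z)
        * (\<Sum>j\<in>UNIV. (\<Sum>p\<in>UNIV. (\<sigma> x k - \<sigma> z k) $ p $ j * (x - z) $ p)^2)
      + Fr_slope (norm (x - z)) * (norm (\<sigma> x k - \<sigma> z k))^2)
    + Fr_slope (norm (x - z)) * ((x - z) \<bullet> (b x k - b z k))"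
proof -
  have "joinv (b x k) (b z k) \<bullet> grad Fr_dist (joinv x z) = Fr_slope (norm (x - z)) * ((x - z) \<bullet> (b x k - b z k))"
    unfolding inner_vec_def grad_Fr_dist_joinv[OF assms]
    by (simp add: sum_UNIV_Plus joinv_def side_sign_def coord_def sum_distrib_left
        sum_subtractf[symmetric] algebra_simps)
      (simp add: sum.distrib[symmetric] sum_subtractf[symmetric] algebra_simps)
  then show ?thesis
    unfolding Omega_d_def joint_fun_coupling_distance trace_coup_a_hess_Fr_dist[OF assms] by simp
qed

lemma Omega_j_coupling_distance:
  assumes "x \<noteq> z"
  shows "Omega_j c \<nu> coupling_distance x k z k = (\<integral>u. Fr (norm (x - z + (c x k u - c z k u)))
      - Fr (norm (x - z)) - Fr_slope (norm (x - z)) * ((x - z) \<bullet> (c x k u - c z k u)) \<partial>\<nu>)"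
proof -
  have D: "Dx coupling_distance x k z k = Fr_slope (norm (x - z)) *\<^sub>R (x - z)"
    "Dz coupling_distance x k z k = - Fr_slope (norm (x - z)) *\<^sub>R (x - z)"
    unfolding Dx_def Dz_def joint_fun_coupling_distance grad_Fr_dist_joinv[OF assms]
    by (simp_all add: vec_eq_iff side_sign_def coord_def)
  show ?thesis unfolding Omega_j_def D
    by (intro Bochner_Integration.integral_cong) (simp_all add: algebra_simps inner_diff_right)
qed

lemma Fr_le_tangent:
  assumes "r \<ge> 0" "s \<ge> 0"
  shows "Fr s \<le> Fr r + (s - r) / (1 + r)^2"
proof -
  have "1 + r \<noteq> 0" "1 + s \<noteq> 0" using assms by auto
  then have "Fr s - Fr r - (s - r) / (1 + r)^2 = - ((r - s)^2 / ((1 + r)^2 * (1 + s)))"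
    unfolding Fr_def by (simp add: divide_simps) algebra
  also have "\<dots> \<le> 0" using assms by simp
  finally show ?thesis by simp
qed

lemma Fr_norm_jump_le:
  fixes v \<Delta> :: "'a::real_inner"
  assumes "v \<noteq> 0"
  shows "Fr (norm (v + \<Delta>)) - Fr (norm v) - Fr_slope (norm v) * (v \<bullet> \<Delta>)
     \<le> Fr_slope (norm v) / 2 * min ((norm \<Delta>)^2) (4 * norm v * norm \<Delta>)"
proof -
  define r where "r = norm v"
  define s where "s = norm (v + \<Delta>)"
  have r0: "r > 0" using assms by (simp add: r_def)
  have G0: "Fr_slope r > 0" using Fr_slope_pos[OF r0] .
  have "Fr s \<le> Fr r + (s - r) * (Fr_slope r * r)"
    using Fr_le_tangent[of r s] Fr_slope_mult_self[OF r0] r0 by (simp add: s_def)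
  then have tangent: "Fr s - Fr r - Fr_slope r * (v \<bullet> \<Delta>) \<le> Fr_slope r * (r * s - r^2 - v \<bullet> \<Delta>)"
    by (simp add: power2_eq_square algebra_simps)
  have s2: "s^2 = r^2 + 2 * (v \<bullet> \<Delta>) + (norm \<Delta>)^2"
    unfolding s_def r_def power2_norm_eq_inner by (simp add: inner_add algebra_simps inner_commute)
  have "r * s \<le> (r^2 + s^2) / 2"
    using sum_squares_ge_zero[of "r - s" 0] by (simp add: power2_eq_square algebra_simps)
  then have small: "r * s - r^2 - v \<bullet> \<Delta> \<le> (norm \<Delta>)^2 / 2"
    using s2 by simp
  have "r * s \<le> r * (r + norm \<Delta>)"
    using r0 norm_triangle_ineq[of v \<Delta>] by (intro mult_left_mono) (auto simp: r_def s_def)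
  moreover have "- (v \<bullet> \<Delta>) \<le> r * norm \<Delta>"
    using norm_cauchy_schwarz[of "-v" \<Delta>] by (simp add: r_def)
  ultimately have large: "r * s - r^2 - v \<bullet> \<Delta> \<le> 2 * r * norm \<Delta>"
    by (simp add: power2_eq_square algebra_simps)
  have "r * s - r^2 - v \<bullet> \<Delta> \<le> min ((norm \<Delta>)^2) (4 * r * norm \<Delta>) / 2"
    using small large by (simp add: min_def)
  then have "Fr_slope r * (r * s - r^2 - v \<bullet> \<Delta>) \<le> Fr_slope r / 2 * min ((norm \<Delta>)^2) (4 * r * norm \<Delta>)"
    using mult_left_mono[of _ _ "Fr_slope r"] G0 by fastforce
  with tangent show ?thesis by (simp add: r_def s_def)
qed

text \<open>In dimension one the jump does not change the sign of \<open>x - z\<close> (monotonicity of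
  \<open>x \<mapsto> x + c(x,k,u)\<close>), and on either half-line \<open>Fr \<circ> abs\<close> is concave.\<close>
lemma Fr_abs_jump_nonpos:
  fixes d e :: real
  assumes "d \<noteq> 0" "d \<le> 0 \<longrightarrow> d + e \<le> 0" "d \<ge> 0 \<longrightarrow> d + e \<ge> 0"
  shows "Fr \<bar>d + e\<bar> - Fr \<bar>d\<bar> - Fr_slope \<bar>d\<bar> * (d * e) \<le> 0"
proof -
  have "Fr_slope \<bar>d\<bar> * (d * e) = sgn d * e * (Fr_slope \<bar>d\<bar> * \<bar>d\<bar>)"
    by (metis mult.assoc mult.commute sgn_mult_abs)
  also have "\<dots> = (\<bar>d + e\<bar> - \<bar>d\<bar>) / (1 + \<bar>d\<bar>)^2"
    using assms Fr_slope_mult_self[of "\<bar>d\<bar>"] by (cases "d > 0") (auto simp: sgn_if)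
  finally show ?thesis
    using Fr_le_tangent[of "\<bar>d\<bar>" "\<bar>d + e\<bar>"] by simp
qed

lemma integral_le_cmult_nn_integral:
  fixes F h :: "'u \<Rightarrow> real"
  assumes le: "\<And>u. F u \<le> C * h u" and C: "C > 0"
    and finite: "(\<integral>\<^sup>+u. ennreal (h u) \<partial>M) \<noteq> \<infinity>"
  shows "integral\<^sup>L M F \<le> C * enn2real (\<integral>\<^sup>+u. ennreal (h u) \<partial>M)"
proof (cases "integrable M F")
  case False
  then show ?thesis using C by (simp add: not_integrable_integral_eq enn2real_nonneg)
next
  case True
  then have "integral\<^sup>L M (\<lambda>u. F u / C) \<le> enn2real (\<integral>\<^sup>+u. ennreal (F u / C) \<partial>M)"
    by (subst real_lebesgue_integral_def) (simp_all add: enn2real_nonneg)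
  also have "\<dots> \<le> enn2real (\<integral>\<^sup>+u. ennreal (h u) \<partial>M)"
    using le C finite
    by (intro enn2real_mono nn_integral_mono ennreal_leI) (auto simp: divide_le_eq mult.commute top.not_eq_extremum)
  finally show ?thesis
    using C by (simp add: divide_le_eq mult.commute)
qed

definition conservative_Qmatrix :: "(nat \<Rightarrow> nat \<Rightarrow> 'a \<Rightarrow> real) \<Rightarrow> bool" where
  "conservative_Qmatrix q \<longleftrightarrow>
     (\<forall>k l x. k \<noteq> l \<longrightarrow> q k l x \<ge> 0) \<and> (\<forall>k x. summable (\<lambda>l. q k l x)) \<and>
     (\<forall>k x. q k k x = - (\<Sum>l. if l = k then 0 else q k l x))"

lemma summable_offdiagonal:
  assumes "summable (f :: nat \<Rightarrow> real)"
  shows "summable (\<lambda>l. if l = k then 0 else f l)"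
proof -
  have "summable (\<lambda>l. f l - (if l = k then f l else 0))"
    using assms by (intro summable_diff) auto
  then show ?thesis by (simp add: if_distrib cong: if_cong)
qed

lemma conservative_Qmatrix_diag_nonpos:
  assumes "conservative_Qmatrix q"
  shows "q k k x \<le> 0"
proof -
  have "0 \<le> (\<Sum>l. if l = k then 0 else q k l x)"
    using assms by (intro suminf_nonneg summable_offdiagonal) (auto simp: conservative_Qmatrix_def)
  then show ?thesis using assms by (simp add: conservative_Qmatrix_def)
qed

text \<open>On the diagonal only the two marginal switching terms of \<open>Omega_s\<close> survive, and their
  rates add up to the total variation of the rows \<open>q k \<cdot> x\<close> and \<open>q k \<cdot> z\<close>.\<close>
lemma Omega_s_diagonal:
  assumes q: "conservative_Qmatrix q"
    and left: "\<And>m. f x m z k - f x k z k = (if m \<noteq> k then 1 else 0)"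
    and right: "\<And>m. f x k z m - f x k z k = (if k \<noteq> m then 1 else 0)"
    and both: "\<And>m. f x m z m - f x k z k = 0"
  shows "Omega_s q f x k z k = (\<Sum>l. if l = k then 0 else \<bar>q k l x - q k l z\<bar>)"
proof -
  have qn: "\<And>l y. l \<noteq> k \<Longrightarrow> q k l y \<ge> 0" and qs: "\<And>y. summable (\<lambda>l. q k l y)"
    using q by (auto simp: conservative_Qmatrix_def)
  define a where "a = (\<lambda>l. max 0 (q k l x - q k l z) * (if l \<noteq> k then 1 else 0))"
  define b where "b = (\<lambda>l. max 0 (q k l z - q k l x) * (if k \<noteq> l then 1 else 0))"
  have "summable a"
    by (rule summable_comparison_test'[OF summable_offdiagonal[OF qs[of x]], where N = 0])
      (use qn in \<open>auto simp: a_def\<close>)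
  moreover have "summable b"
    by (rule summable_comparison_test'[OF summable_offdiagonal[OF qs[of z]], where N = 0])
      (use qn in \<open>auto simp: b_def\<close>)
  ultimately have "Omega_s q f x k z k = (\<Sum>l. a l + b l)"
    unfolding Omega_s_def left right both a_def b_def by (simp add: suminf_add)
  also have "(\<lambda>l. a l + b l) = (\<lambda>l. if l = k then 0 else \<bar>q k l x - q k l z\<bar>)"
    by (auto simp: a_def b_def fun_eq_iff max_def)
  finally show ?thesis .
qed

lemma Omega_s_regime_mismatch_nonpos:
  assumes q: "conservative_Qmatrix q" and kl: "k \<noteq> l"
  shows "Omega_s q regime_mismatch x k z l \<le> 0"
proof -
  have qn: "\<And>i j y. i \<noteq> j \<Longrightarrow> q i j y \<ge> 0" and qs: "\<And>i y. summable (\<lambda>j. q i j y)"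
    using q by (auto simp: conservative_Qmatrix_def)
  have dk: "q k k x \<le> 0" and dl: "q l l z \<le> 0"
    using conservative_Qmatrix_diag_nonpos[OF q] by auto
  define h where "h = (\<lambda>m. - min (q k m x) (q l m z))"
  define h' where "h' = (\<lambda>m. if m = k then - q k k x else if m = l then - q l l z else (0::real))"
  have "summable h"
    by (rule summable_comparison_test'[OF qs[of k x], where N = "Suc (max k l)"])
      (use qn in \<open>auto simp: h_def\<close>)
  moreover have "h m \<le> h' m" for m
    using qn[of k m x] qn[of l m z] qn[of l k z] qn[of k l x] kl dk dl by (auto simp: h_def h'_def)
  moreover have "summable h'"
    by (rule summable_finite[of "{k, l}"]) (auto simp: h'_def)
  moreover have "suminf h' = - q k k x - q l l z"
    using kl by (subst suminf_finite[of "{k, l}"]) (auto simp: h'_def)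
  ultimately have diagonal: "suminf h \<le> - q k k x - q l l z"
    using suminf_le by metis
  have "(\<Sum>m. max 0 (q k m x - q l m z) * ((if m \<noteq> l then 1 else 0) - (if k \<noteq> l then 1 else 0)))
      = - max 0 (q k l x - q l l z)"
    using kl by (subst suminf_finite[of "{l}"]) auto
  moreover have "(\<Sum>m. max 0 (q l m z - q k m x) * ((if k \<noteq> m then 1 else 0) - (if k \<noteq> l then 1 else 0)))
      = - max 0 (q l k z - q k k x)"
    using kl by (subst suminf_finite[of "{k}"]) auto
  ultimately have "Omega_s q regime_mismatch x k z l
     = - max 0 (q k l x - q l l z) - max 0 (q l k z - q k k x) + suminf h"
    unfolding Omega_s_def h_def using kl by simp
  also have "\<dots> \<le> - q k l x - q l k z"
    using diagonal by linarith
  also have "\<dots> \<le> 0" using qn[of k l x] qn[of l k z] kl by simp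
  finally show ?thesis .
qed

lemma Omega_d_coupling_distance_le:
  assumes "x \<noteq> z"
  shows "Omega_d b \<sigma> coupling_distance x k z k \<le> Fr_slope (norm (x - z)) / 2 *
    (2 * ((x - z) \<bullet> (b x k - b z k)) + (norm (\<sigma> x k - \<sigma> z k))^2)"
proof -
  have "Fr_slope_deriv (norm (x - z)) / norm (x - z)
      * (\<Sum>j\<in>UNIV. (\<Sum>p\<in>UNIV. (\<sigma> x k - \<sigma> z k) $ p $ j * (x - z) $ p)^2) \<le> 0"
    using assms Fr_slope_deriv_neg[of "norm (x - z)"]
    by (intro mult_nonpos_nonneg divide_nonpos_pos sum_nonneg) auto
  then show ?thesis
    unfolding Omega_d_coupling_distance[OF assms] by (simp add: algebra_simps)
qed

lemma Omega_j_coupling_distance_le: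
  assumes "x \<noteq> z"
    and finite: "(\<integral>\<^sup>+u. ennreal (min ((norm (c x k u - c z k u))^2)
      (4 * norm (x - z) * norm (c x k u - c z k u))) \<partial>\<nu>) \<noteq> \<infinity>"
  shows "Omega_j c \<nu> coupling_distance x k z k \<le> Fr_slope (norm (x - z)) / 2 *
    enn2real (\<integral>\<^sup>+u. ennreal (min ((norm (c x k u - c z k u))^2)
      (4 * norm (x - z) * norm (c x k u - c z k u))) \<partial>\<nu>)"
  unfolding Omega_j_coupling_distance[OF assms(1)]
proof (rule integral_le_cmult_nn_integral[OF _ _ finite])
  show "Fr_slope (norm (x - z)) / 2 > 0"
    using assms Fr_slope_pos[of "norm (x - z)"] by simp
qed (use Fr_norm_jump_le[of "x - z"] assms in auto)

lemma enn2ereal_add_le_ereal: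
  assumes "enn2ereal I + ereal a \<le> ereal b"
  shows "I \<noteq> \<infinity> \<and> enn2real I + a \<le> b"
  using assms by (cases I rule: ennreal_cases) auto

lemma Omega_d_Omega_j_coupling_distance_le:
  assumes "x \<noteq> z"
    and bound: "enn2ereal (\<integral>\<^sup>+u. ennreal (min ((norm (c x k u - c z k u))^2)
        (4 * norm (x - z) * norm (c x k u - c z k u))) \<partial>\<nu>)
      + ereal (2 * ((x - z) \<bullet> (b x k - b z k)) + (norm (\<sigma> x k - \<sigma> z k))^2) \<le> ereal B"
  shows "Omega_d b \<sigma> coupling_distance x k z k + Omega_j c \<nu> coupling_distance x k z k
    \<le> Fr_slope (norm (x - z)) / 2 * B"
proof -
  obtain finite: "(\<integral>\<^sup>+u. ennreal (min ((norm (c x k u - c z k u))^2)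
        (4 * norm (x - z) * norm (c x k u - c z k u))) \<partial>\<nu>) \<noteq> \<infinity>"
    and sum_le: "enn2real (\<integral>\<^sup>+u. ennreal (min ((norm (c x k u - c z k u))^2)
        (4 * norm (x - z) * norm (c x k u - c z k u))) \<partial>\<nu>)
      + (2 * ((x - z) \<bullet> (b x k - b z k)) + (norm (\<sigma> x k - \<sigma> z k))^2) \<le> B"
    using enn2ereal_add_le_ereal[OF bound] by blast
  have "Fr_slope (norm (x - z)) > 0"
    using assms Fr_slope_pos[of "norm (x - z)"] by simp
  then show ?thesis
    using Omega_d_coupling_distance_le[OF assms(1), of b \<sigma> k]
      Omega_j_coupling_distance_le[where c = c and k = k and \<nu> = \<nu>, OF assms(1) finite]
      mult_left_mono[OF sum_le, of "Fr_slope (norm (x - z)) / 2"]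
    by (simp add: distrib_left)
qed

lemma norm_vec_singleton:
  assumes "UNIV = {p0 :: 'n::finite}"
  shows "norm (v :: 'a::real_normed_vector^'n) = norm (v $ p0)"
  unfolding norm_vec_def L2_set_def assms by simp

lemma inner_vec_singleton:
  assumes "UNIV = {p0 :: 'n::finite}"
  shows "(v :: real^'n) \<bullet> w = v $ p0 * w $ p0"
  unfolding inner_vec_def assms by simp

lemma Omega_d_coupling_distance_le_1d:
  fixes \<sigma> :: "real^'n \<Rightarrow> nat \<Rightarrow> real^'n^'n"
  assumes p0: "UNIV = {p0 :: 'n::finite}" and "x \<noteq> z"
  shows "Omega_d b \<sigma> coupling_distance x k z k \<le> Fr_slope (norm (x - z)) * ((x - z) \<bullet> (b x k - b z k))"
proof -
  define r where "r = norm (x - z)"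
  define t where "t = (\<sigma> x k - \<sigma> z k) $ p0 $ p0"
  have r0: "r > 0" using assms by (simp add: r_def)
  have "(\<Sum>j\<in>UNIV. (\<Sum>p\<in>UNIV. (\<sigma> x k - \<sigma> z k) $ p $ j * (x - z) $ p)^2) = t^2 * r^2"
    using norm_vec_singleton[OF p0, of "x - z"] by (simp add: p0 t_def r_def power_mult_distrib)
  moreover have "(norm (\<sigma> x k - \<sigma> z k))^2 = t^2"
    using norm_vec_singleton[OF p0, of "\<sigma> x k - \<sigma> z k"] norm_vec_singleton[OF p0, of "(\<sigma> x k - \<sigma> z k) $ p0"]
    by (simp add: t_def)
  ultimately have "Fr_slope_deriv r / r * (\<Sum>j\<in>UNIV. (\<Sum>p\<in>UNIV. (\<sigma> x k - \<sigma> z k) $ p $ j * (x - z) $ p)^2)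
      + Fr_slope r * (norm (\<sigma> x k - \<sigma> z k))^2 = t^2 * (Fr_slope_deriv r * r + Fr_slope r)"
    using r0 by (simp add: power2_eq_square algebra_simps)
  also have "\<dots> \<le> 0"
    using Fr_slope_deriv_mult_add_nonpos[OF r0] by (simp add: mult_nonneg_nonpos)
  finally show ?thesis
    unfolding Omega_d_coupling_distance[OF assms(2)] by (simp add: r_def)
qed

lemma Omega_j_coupling_distance_nonpos_1d:
  assumes p0: "UNIV = {p0 :: 'n::finite}" and "x \<noteq> z"
    and mono: "\<And>u. u \<in> space \<nu> \<Longrightarrow>
      (x $ p0 \<le> z $ p0 \<longrightarrow> (x + c x k u) $ p0 \<le> (z + c z k u) $ p0) \<and>
      (z $ p0 \<le> x $ p0 \<longrightarrow> (z + c z k u) $ p0 \<le> (x + c x k u) $ p0)"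
  shows "Omega_j c \<nu> coupling_distance x k z k \<le> 0"
proof -
  define d where "d = (x - z) $ p0"
  have "d \<noteq> 0"
    using assms(2) norm_vec_singleton[OF p0, of "x - z"] by (auto simp: d_def)
  have "0 \<le> (\<integral>u. - (Fr (norm (x - z + (c x k u - c z k u))) - Fr (norm (x - z))
      - Fr_slope (norm (x - z)) * ((x - z) \<bullet> (c x k u - c z k u))) \<partial>\<nu>)"
  proof (rule Bochner_Integration.integral_nonneg)
    fix u assume "u \<in> space \<nu>"
    define e where "e = (c x k u - c z k u) $ p0"
    have "d \<le> 0 \<longrightarrow> d + e \<le> 0" "d \<ge> 0 \<longrightarrow> d + e \<ge> 0"
      using mono[OF \<open>u \<in> space \<nu>\<close>] by (auto simp: d_def e_def)
    from Fr_abs_jump_nonpos[OF \<open>d \<noteq> 0\<close> this]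
    show "0 \<le> - (Fr (norm (x - z + (c x k u - c z k u))) - Fr (norm (x - z))
        - Fr_slope (norm (x - z)) * ((x - z) \<bullet> (c x k u - c z k u)))"
      unfolding norm_vec_singleton[OF p0] inner_vec_singleton[OF p0] by (simp add: d_def e_def)
  qed
  then show ?thesis
    unfolding Omega_j_coupling_distance[OF assms(2)] by (simp only: integral_minus)
qed

lemma Omega_d_Omega_j_coupling_distance_le_1d:
  fixes \<sigma> :: "real^'n \<Rightarrow> nat \<Rightarrow> real^'n^'n"
  assumes p0: "UNIV = {p0 :: 'n::finite}" and xz: "x \<noteq> z"
    and drift: "sgnF ((x - z) $ p0) * (b x k - b z k) $ p0 \<le> K"
    and mono: "\<And>u. u \<in> space \<nu> \<Longrightarrow>
      (x $ p0 \<le> z $ p0 \<longrightarrow> (x + c x k u) $ p0 \<le> (z + c z k u) $ p0) \<and>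
      (z $ p0 \<le> x $ p0 \<longrightarrow> (z + c z k u) $ p0 \<le> (x + c x k u) $ p0)"
  shows "Omega_d b \<sigma> coupling_distance x k z k + Omega_j c \<nu> coupling_distance x k z k
    \<le> Fr_slope (norm (x - z)) * norm (x - z) * K"
proof -
  define r where "r = norm (x - z)"
  have r0: "r > 0" using xz by (simp add: r_def)
  have "(x - z) $ p0 \<noteq> 0" "r = \<bar>(x - z) $ p0\<bar>"
    using r0 norm_vec_singleton[OF p0, of "x - z"] by (auto simp: r_def)
  then have "(x - z) \<bullet> (b x k - b z k) = r * (sgnF ((x - z) $ p0) * (b x k - b z k) $ p0)"
    by (simp add: inner_vec_singleton[OF p0] sgnF_def abs_if)
  also have "\<dots> \<le> r * K"
    using drift r0 by (intro mult_left_mono) auto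
  finally have "Fr_slope r * ((x - z) \<bullet> (b x k - b z k)) \<le> Fr_slope r * r * K"
    using Fr_slope_pos[OF r0] by (simp add: mult.assoc)
  then show ?thesis
    using Omega_d_coupling_distance_le_1d[OF p0 xz, of b \<sigma> k]
      Omega_j_coupling_distance_nonpos_1d[where c = c and \<nu> = \<nu> and k = k, OF p0 xz mono]
    unfolding r_def by linarith
qed

lemma Omega_d_Omega_j_coupling_distance_le_condF:
  fixes b :: "real^'n \<Rightarrow> nat \<Rightarrow> real^'n" and \<sigma> :: "real^'n \<Rightarrow> nat \<Rightarrow> real^'n^'n"
  assumes cond: "condF b \<sigma> c \<nu> q \<delta>0 \<rho> R \<kappa>"
    and xz: "max (norm x) (norm z) \<le> R" "x \<noteq> z" "norm (x - z) \<le> \<delta>0"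
  shows "Omega_d b \<sigma> coupling_distance x k z k + Omega_j c \<nu> coupling_distance x k z k
    \<le> \<kappa> * \<rho> (norm (x - z)) / (1 + norm (x - z))^2"
proof -
  define r where "r = norm (x - z)"
  have r0: "r > 0" using xz by (simp add: r_def)
  have "Omega_d b \<sigma> coupling_distance x k z k + Omega_j c \<nu> coupling_distance x k z k
      \<le> Fr_slope r * r * (\<kappa> * \<rho> r)"
  proof (cases "CARD('n) \<ge> 2")
    case True
    then have "enn2ereal (\<integral>\<^sup>+u. ennreal (min ((norm (c x k u - c z k u))^2)
        (4 * norm (x - z) * norm (c x k u - c z k u))) \<partial>\<nu>)
      + ereal (2 * ((x - z) \<bullet> (b x k - b z k)) + (norm (\<sigma> x k - \<sigma> z k))^2)
      \<le> ereal (2 * \<kappa> * r * \<rho> r)"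
      using cond xz unfolding condF_def r_def by blast
    from Omega_d_Omega_j_coupling_distance_le[where b = b and \<sigma> = \<sigma> and c = c and \<nu> = \<nu> and k = k,
        OF xz(2) this]
    have "Omega_d b \<sigma> coupling_distance x k z k + Omega_j c \<nu> coupling_distance x k z k
        \<le> Fr_slope r / 2 * (2 * \<kappa> * r * \<rho> r)"
      by (simp only: r_def)
    also have "\<dots> = Fr_slope r * r * (\<kappa> * \<rho> r)"
      by simp
    finally show ?thesis .
  next
    case False
    then have "CARD('n) = 1"
      using zero_less_card_finite[where 'a='n] by linarith
    then obtain p0 :: 'n where p0: "UNIV = {p0}"
      by (rule card_1_singletonE)
    \<comment> \<open>(F)(i) at \<open>(z, x)\<close> gives monotonicity when \<open>z $ p0 \<le> x $ p0\<close>\<close>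
    have "max (norm z) (norm x) \<le> R" "norm (z - x) \<le> \<delta>0"
      using xz by (simp_all add: norm_minus_commute max.commute)
    then have "sgnF ((x - z) $ p0) * (b x k - b z k) $ p0 \<le> \<kappa> * \<rho> r"
      and "\<And>u. u \<in> space \<nu> \<Longrightarrow>
        (x $ p0 \<le> z $ p0 \<longrightarrow> (x + c x k u) $ p0 \<le> (z + c z k u) $ p0) \<and>
        (z $ p0 \<le> x $ p0 \<longrightarrow> (z + c z k u) $ p0 \<le> (x + c x k u) $ p0)"
      using cond xz False unfolding condF_def r_def by (simp_all add: p0)
    from Omega_d_Omega_j_coupling_distance_le_1d[where b = b and \<sigma> = \<sigma> and c = c and \<nu> = \<nu> and k = k,
        OF p0 xz(2) this]
    show ?thesis
      by (simp add: r_def)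
  qed
  then show ?thesis
    using Fr_slope_mult_self[OF r0] by (simp add: r_def)
qed

lemma coupA_regime_mismatch_le:
  assumes q: "conservative_Qmatrix q"
    and rates: "(\<Sum>m. if m = k then 0 else \<bar>q k m x - q k m z\<bar>) \<le> M" and "0 \<le> M"
  shows "coupA b \<sigma> c \<nu> q regime_mismatch x k z l \<le> M"
proof -
  have "Omega_d b \<sigma> regime_mismatch x k z l = 0" "Omega_j c \<nu> regime_mismatch x k z l = 0"
    by (rule Omega_d_state_only Omega_j_state_only)+
  then have "coupA b \<sigma> c \<nu> q regime_mismatch x k z l = Omega_s q regime_mismatch x k z l"
    unfolding coupA_def by (simp only: add_0)
  also have "\<dots> \<le> M"
  proof (cases "k = l")
    case True
    have "Omega_s q regime_mismatch x k z k = (\<Sum>m. if m = k then 0 else \<bar>q k m x - q k m z\<bar>)"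
      by (rule Omega_s_diagonal[OF q]) auto
    with True rates show ?thesis by simp
  next
    case False
    with Omega_s_regime_mismatch_nonpos[OF q False, of x z] \<open>0 \<le> M\<close> show ?thesis by linarith
  qed
  finally show ?thesis .
qed

lemma coupA_coupling_distance_le:
  fixes b :: "real^'n \<Rightarrow> nat \<Rightarrow> real^'n" and \<sigma> :: "real^'n \<Rightarrow> nat \<Rightarrow> real^'n^'n"
  assumes q: "conservative_Qmatrix q" and cond: "condF b \<sigma> c \<nu> q \<delta>0 \<rho> R \<kappa>" and "\<kappa> > 0"
    and growth: "\<rho> (norm (x - z)) \<le> (1 + norm (x - z))^2 * \<rho> (Fr (norm (x - z)))"
    and xz: "max (norm x) (norm z) \<le> R" "x \<noteq> z" "norm (x - z) \<le> \<delta>0"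
  shows "coupA b \<sigma> c \<nu> q coupling_distance x k z k \<le> 2 * \<kappa> * \<rho> (Fr (norm (x - z)))"
proof -
  define r where "r = norm (x - z)"
  have "Omega_d b \<sigma> coupling_distance x k z k + Omega_j c \<nu> coupling_distance x k z k
      \<le> \<kappa> * (\<rho> r / (1 + r)^2)"
    using Omega_d_Omega_j_coupling_distance_le_condF[OF cond xz, of k] by (simp add: r_def)
  also have "\<dots> \<le> \<kappa> * \<rho> (Fr r)"
  proof -
    have "1 + r > 0" unfolding r_def using norm_ge_zero[of "x - z"] by linarith
    then have "(1 + r)^2 > 0" by simp
    then have "\<rho> r / (1 + r)^2 \<le> \<rho> (Fr r)"
      using growth by (simp add: r_def pos_divide_le_eq mult.commute)
    with \<open>\<kappa> > 0\<close> show ?thesis by (intro mult_left_mono) simp_all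
  qed
  moreover have "Omega_s q coupling_distance x k z k = (\<Sum>m. if m = k then 0 else \<bar>q k m x - q k m z\<bar>)"
    by (rule Omega_s_diagonal[OF q]) auto
  then have "Omega_s q coupling_distance x k z k \<le> \<kappa> * \<rho> (Fr r)"
    using cond xz unfolding condF_def r_def by simp
  ultimately show ?thesis
    unfolding coupA_def r_def by linarith
qed

theorem mainTheorem3:
  fixes b :: "real^'n \<Rightarrow> nat \<Rightarrow> real^'n"
    and \<sigma> :: "real^'n \<Rightarrow> nat \<Rightarrow> real^'n^'n"
    and c :: "real^'n \<Rightarrow> nat \<Rightarrow> 'u \<Rightarrow> real^'n"
    and \<nu> :: "'u measure"
    and q :: "nat \<Rightarrow> nat \<Rightarrow> real^'n \<Rightarrow> real"
    and \<delta>0 :: real and \<rho> :: "real \<Rightarrow> real"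
  assumes nu_sigma_finite: "sigma_finite_measure \<nu>"
    and b_meas: "\<And>k. (\<lambda>x. b x k) \<in> borel_measurable borel"
    and sigma_meas: "\<And>k. (\<lambda>x. \<sigma> x k) \<in> borel_measurable borel"
    and c_meas: "(\<lambda>(x, k, u). c x k u) \<in> borel \<Otimes>\<^sub>M (count_space UNIV \<Otimes>\<^sub>M \<nu>) \<rightarrow>\<^sub>M borel"
    and q_nonneg: "\<And>k l x. k \<noteq> l \<Longrightarrow> q k l x \<ge> 0"
    and q_summable: "\<And>k x. summable (\<lambda>l. q k l x)"
    and q_diag: "\<And>k x. q k k x = - (\<Sum>l. if l = k then 0 else q k l x)"
    and delta0_pos: "\<delta>0 > 0"
    and rho_mono: "mono_on {0..} \<rho>"
    and rho_concave: "concave_on {0..} \<rho>"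
    and rho_nonneg: "\<And>r. r \<ge> 0 \<Longrightarrow> \<rho> r \<ge> 0"
    and rho_pos: "\<And>r. r > 0 \<Longrightarrow> 0 < \<rho> r"
    and rho_growth: "\<And>r. r > 0 \<Longrightarrow> \<rho> r \<le> (1 + r)\<^sup>2 * \<rho> (r / (1 + r))"
    and rho_osgood: "(\<integral>\<^sup>+ r\<in>{0<..1}. ennreal (1 / \<rho> r) \<partial>lborel) = \<infinity>"
    and assmF: "\<forall>R>0. \<exists>\<kappa>>0. condF b \<sigma> c \<nu> q \<delta>0 \<rho> R \<kappa>"
  shows "\<forall>R>0. \<forall>\<kappa>>0. condF b \<sigma> c \<nu> q \<delta>0 \<rho> R \<kappa> \<longrightarrow>
     (\<forall>k l x z. max (norm x) (norm z) \<le> R \<longrightarrow>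
        coupA b \<sigma> c \<nu> q (\<lambda>x k z l. if k \<noteq> l then 1 else 0) x k z l
          \<le> \<kappa> * \<rho> (Fr (norm (x - z)))) \<and>
     (\<forall>k x z. max (norm x) (norm z) \<le> R \<and> 0 < norm (x - z) \<and> norm (x - z) \<le> \<delta>0 \<longrightarrow>
        coupA b \<sigma> c \<nu> q (\<lambda>x k z l. Fr (norm (x - z)) + (if k \<noteq> l then 1 else 0)) x k z k
          \<le> 2 * \<kappa> * \<rho> (Fr (norm (x - z))))"
proof (intro allI impI conjI)
  fix R \<kappa> :: real
  assume "\<kappa> > 0" and cond: "condF b \<sigma> c \<nu> q \<delta>0 \<rho> R \<kappa>"
  have q: "conservative_Qmatrix q"
    using q_nonneg q_summable q_diag by (simp add: conservative_Qmatrix_def)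
  show "coupA b \<sigma> c \<nu> q regime_mismatch x k z l \<le> \<kappa> * \<rho> (Fr (norm (x - z)))"
    if "max (norm x) (norm z) \<le> R" for k l and x z :: "real^'n"
  proof (rule coupA_regime_mismatch_le[OF q])
    show "(\<Sum>m. if m = k then 0 else \<bar>q k m x - q k m z\<bar>) \<le> \<kappa> * \<rho> (Fr (norm (x - z)))"
      using cond that unfolding condF_def by blast
    show "0 \<le> \<kappa> * \<rho> (Fr (norm (x - z)))"
      using \<open>\<kappa> > 0\<close> rho_nonneg[of "Fr (norm (x - z))"] by (simp add: Fr_def)
  qed
  show "coupA b \<sigma> c \<nu> q coupling_distance x k z k \<le> 2 * \<kappa> * \<rho> (Fr (norm (x - z)))"
    if "max (norm x) (norm z) \<le> R \<and> 0 < norm (x - z) \<and> norm (x - z) \<le> \<delta>0" for k and x z :: "real^'n"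
    using coupA_coupling_distance_le[OF q cond \<open>\<kappa> > 0\<close>] rho_growth[of "norm (x - z)"] that
    by (simp add: Fr_def)
qed

end
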